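(* Let $V$ be a finite set of $n$ elements and $w:\binom{V}{2}\to\mathbb{R}$ arbitrary real weights on its unordered pairs (not necessarily metric or nonnegative). Let $G$ be the complete graph on $V$ with edge weights $w$, let $T$ be a maximum-weight spanning tree of $G$, and let $\chi:V\to\{0,1\}$ be a proper 2-coloring of $T$. Then for every $\lambda\in\mathbb{R}$ and every $c\in\{0,\dots,n\}$: the graph $G_{>\lambda}$ admits a proper 2-coloring of cardinality $c$ if and only if $\mathrm{diam}(\chi)\le\lambda$ and $T_{>\lambda}$ admits a proper 2-coloring of cardinality $c$.
   Context: For a graph $H=(V,E)$ with edge weights $w$, $H_{>\lambda}$ denotes the spanning subgraph $(V,\{uv\in E: w(uv)>\lambda\})$. A 2-coloring $\varphi:V\to\{0,1\}$ is proper for a graph if the endpoints of every edge receive different colors; it has cardinality $c$ if one of its color classes has exactly $c$ elements. For $S\subseteq V$, $\mathrm{diam}(S)=\max_{\{u,v\}\subseteq S}w(uv)$, with $\mathrm{diam}(S)=-\infty$ if $|S|\le1$. For a 2-coloring $\varphi$, $\mathrm{diam}(\varphi)=\max\{\mathrm{diam}(\varphi^{-1}(0)),\mathrm{diam}(\varphi^{-1}(1))\}$, where diameters use all pair weights $w$. *)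

theory Defs
  imports Main "HOL-Library.Extended_Real"
begin

text \<open>Undirected simple graphs on a vertex set V are given by edge sets E of
  unordered pairs, an edge being a two-element set. Weights are functions on
  unordered pairs.\<close>

definition complete_edges :: "'a set \<Rightarrow> 'a set set" where
  "complete_edges V = {{u, v} | u v. u \<in> V \<and> v \<in> V \<and> u \<noteq> v}"

definition adj :: "'a set set \<Rightarrow> 'a \<Rightarrow> 'a \<Rightarrow> bool" where
  "adj E u v \<longleftrightarrow> {u, v} \<in> E"

definition connected_graph :: "'a set \<Rightarrow> 'a set set \<Rightarrow> bool" where
  "connected_graph V E \<longleftrightarrow> (\<forall>u\<in>V. \<forall>v\<in>V. (adj E)\<^sup>*\<^sup>* u v)"

definition is_cycle :: "'a set set \<Rightarrow> 'a list \<Rightarrow> bool" where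
  "is_cycle E xs \<longleftrightarrow> length xs \<ge> 3 \<and> distinct xs \<and>
     (\<forall>i < length xs. {xs ! i, xs ! ((i + 1) mod length xs)} \<in> E)"

definition acyclic_graph :: "'a set set \<Rightarrow> bool" where
  "acyclic_graph E \<longleftrightarrow> (\<nexists>xs. is_cycle E xs)"

definition spanning_tree :: "'a set \<Rightarrow> 'a set set \<Rightarrow> bool" where
  "spanning_tree V T \<longleftrightarrow> T \<subseteq> complete_edges V \<and> connected_graph V T \<and> acyclic_graph T"

definition max_spanning_tree :: "'a set \<Rightarrow> ('a set \<Rightarrow> real) \<Rightarrow> 'a set set \<Rightarrow> bool" where
  "max_spanning_tree V w T \<longleftrightarrow> spanning_tree V T \<and>
     (\<forall>T'. spanning_tree V T' \<longrightarrow> sum w T' \<le> sum w T)"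

definition above :: "('a set \<Rightarrow> real) \<Rightarrow> real \<Rightarrow> 'a set set \<Rightarrow> 'a set set" where
  "above w lam E = {e \<in> E. w e > lam}"

text \<open>2-colorings are maps into bool (False = colour 0, True = colour 1).\<close>
definition proper_col :: "'a set set \<Rightarrow> ('a \<Rightarrow> bool) \<Rightarrow> bool" where
  "proper_col E \<phi> \<longleftrightarrow> (\<forall>u v. {u, v} \<in> E \<longrightarrow> \<phi> u \<noteq> \<phi> v)"

definition has_cardinality :: "'a set \<Rightarrow> ('a \<Rightarrow> bool) \<Rightarrow> nat \<Rightarrow> bool" where
  "has_cardinality V \<phi> c \<longleftrightarrow> card {v \<in> V. \<not> \<phi> v} = c \<or> card {v \<in> V. \<phi> v} = c"

definition admits_proper_col_card :: "'a set \<Rightarrow> 'a set set \<Rightarrow> nat \<Rightarrow> bool" where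
  "admits_proper_col_card V E c \<longleftrightarrow> (\<exists>\<phi>. proper_col E \<phi> \<and> has_cardinality V \<phi> c)"

text \<open>diam(S) = max of pair weights in S, and -infinity if |S| <= 1.\<close>
definition diam :: "('a set \<Rightarrow> real) \<Rightarrow> 'a set \<Rightarrow> ereal" where
  "diam w S = Sup {ereal (w {u, v}) | u v. u \<in> S \<and> v \<in> S \<and> u \<noteq> v}"

definition diam_col :: "('a set \<Rightarrow> real) \<Rightarrow> 'a set \<Rightarrow> ('a \<Rightarrow> bool) \<Rightarrow> ereal" where
  "diam_col w V \<phi> = max (diam w {v \<in> V. \<not> \<phi> v}) (diam w {v \<in> V. \<phi> v})"

end

theory Submission
  imports Defs "HOL-Library.Transitive_Closure_Table"
begin

text \<open>The key fact is the cycle property of a maximum spanning tree T: any two vertices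
  u, v are joined by a path in T all of whose edges weigh at least w{u, v}. Otherwise the
  T-path from u to v leaves the component S of u in these heavy edges through a lighter
  edge xy, and replacing xy by uv yields a heavier spanning tree. Hence, if w{u, v} > \<lambda>,
  then u and v are connected in T_{>\<lambda>}, so every proper colouring of T_{>\<lambda>} gives u and v
  equal colours exactly when \<chi> does. A proper colouring of T_{>\<lambda>} is therefore proper on
  G_{>\<lambda>} iff \<chi> separates every pair of weight > \<lambda>, i.e. iff diam \<chi> \<le> \<lambda>; and a proper
  colouring of G_{>\<lambda>} is in particular one of its subgraph T_{>\<lambda>}.\<close>

lemma adj_commute: "adj E u v \<longleftrightarrow> adj E v u"
  by (simp add: adj_def insert_commute)

lemma rtranclp_adj_sym: "(adj E)\<^sup>*\<^sup>* u v \<Longrightarrow> (adj E)\<^sup>*\<^sup>* v u"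
proof -
  have "symp (adj E)" by (auto intro: sympI simp: adj_commute)
  then show "(adj E)\<^sup>*\<^sup>* u v \<Longrightarrow> (adj E)\<^sup>*\<^sup>* v u" by (meson symp_rtranclp sympD)
qed

lemma rtranclp_adj_mono: "E \<subseteq> F \<Longrightarrow> (adj E)\<^sup>*\<^sup>* u v \<Longrightarrow> (adj F)\<^sup>*\<^sup>* u v"
  by (rule mono_rtranclp[rule_format]) (auto simp: adj_def)

lemma rtranclp_chain: "(\<And>i. i < n \<Longrightarrow> R (f i) (f (Suc i))) \<Longrightarrow> R\<^sup>*\<^sup>* (f 0) (f n)"
  by (induction n) (auto intro: rtranclp.rtrancl_into_rtrancl)

lemma rtranclp_exit_edge:
  assumes "R\<^sup>*\<^sup>* a b" "a \<in> S" "b \<notin> S"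
  obtains x y where "R x y" "x \<in> S" "y \<notin> S"
    and "(\<lambda>p q. R p q \<and> p \<notin> S \<and> q \<notin> S)\<^sup>*\<^sup>* y b"
proof -
  define Out where "Out = (\<lambda>p q. R p q \<and> p \<notin> S \<and> q \<notin> S)"
  from assms have "\<exists>x y. R x y \<and> x \<in> S \<and> y \<notin> S \<and> Out\<^sup>*\<^sup>* y b"
  proof (induction rule: rtranclp_induct)
    case (step c b)
    show ?case
    proof (cases "c \<in> S")
      case True
      then show ?thesis using step by auto
    next
      case False
      with step obtain x y where "R x y" "x \<in> S" "y \<notin> S" "Out\<^sup>*\<^sup>* y c" by blast
      moreover have "Out c b" using step False by (simp add: Out_def)
      ultimately show ?thesis by (meson rtranclp.rtrancl_into_rtrancl)
    qed
  qed simp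
  then show ?thesis using that unfolding Out_def by blast
qed

lemma doubleton_in_complete_edges_iff:
  "{u, v} \<in> complete_edges V \<longleftrightarrow> u \<in> V \<and> v \<in> V \<and> u \<noteq> v"
  by (auto simp: complete_edges_def doubleton_eq_iff)

lemma finite_complete_edges: "finite V \<Longrightarrow> finite (complete_edges V)"
  by (rule finite_subset[of _ "Pow V"]) (auto simp: complete_edges_def)

lemma acyclic_graph_subset: "E \<subseteq> F \<Longrightarrow> acyclic_graph F \<Longrightarrow> acyclic_graph E"
  unfolding acyclic_graph_def is_cycle_def by blast

lemma is_cycle_rotate:
  assumes cyc: "is_cycle E xs"
  shows "is_cycle E (rotate m xs)"
proof -
  let ?L = "length xs"
  have "{rotate m xs ! i, rotate m xs ! ((i + 1) mod ?L)} \<in> E" if i: "i < ?L" for i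
  proof -
    have pos: "0 < ?L" and "xs \<noteq> []" using i by auto
    have "rotate m xs ! i = xs ! ((m + i) mod ?L)"
      using nth_rotate[of i xs m] i \<open>xs \<noteq> []\<close> by simp
    moreover have "rotate m xs ! ((i + 1) mod ?L) = xs ! (((m + i) mod ?L + 1) mod ?L)"
      using nth_rotate[of "(i + 1) mod ?L" xs m] pos by (simp add: mod_simps add.assoc)
    moreover have "(m + i) mod ?L < ?L" using pos by simp
    ultimately show ?thesis using cyc unfolding is_cycle_def by simp
  qed
  then show ?thesis using cyc unfolding is_cycle_def by simp
qed

lemma acyclic_edge_is_bridge:
  assumes acyc: "acyclic_graph E" and e: "{x, y} \<in> E" and "x \<noteq> y"
  shows "\<not> (adj (E - {{x, y}}))\<^sup>*\<^sup>* x y"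
proof
  let ?F = "E - {{x, y}}"
  assume "(adj ?F)\<^sup>*\<^sup>* x y"
  then obtain p where p: "rtrancl_path (adj ?F) x p y" and dist: "distinct (x # p)"
    by (metis rtranclp_eq_rtrancl_path rtrancl_path_distinct)
  have "p \<noteq> []" using p \<open>x \<noteq> y\<close> by (auto elim: rtrancl_path.cases)
  then have last: "p ! (length p - 1) = y"
    using rtrancl_path_last[OF p] by (simp add: last_conv_nth)
  have "length p \<noteq> 1"
  proof
    assume "length p = 1"
    then have "adj ?F x y" using rtrancl_path_nth[OF p, of 0] last by simp
    then show False by (simp add: adj_def)
  qed
  have "is_cycle E (x # p)"
    unfolding is_cycle_def
  proof (intro conjI allI impI)
    show "3 \<le> length (x # p)" using \<open>p \<noteq> []\<close> \<open>length p \<noteq> 1\<close> by (cases p) (auto simp: Suc_le_eq)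
    show "distinct (x # p)" by (rule dist)
    fix i assume i: "i < length (x # p)"
    show "{(x # p) ! i, (x # p) ! ((i + 1) mod length (x # p))} \<in> E"
    proof (cases "i < length p")
      case True
      then have "adj ?F ((x # p) ! i) (p ! i)" by (rule rtrancl_path_nth[OF p])
      then show ?thesis using True by (simp add: adj_def)
    next
      case False
      then have "i = length p" using i by simp
      then show ?thesis using e last \<open>p \<noteq> []\<close> by (simp add: insert_commute nth_Cons')
    qed
  qed
  then show False using acyc unfolding acyclic_graph_def by blast
qed

lemma acyclic_insert_edge:
  assumes acyc: "acyclic_graph E" and disconnected: "\<not> (adj E)\<^sup>*\<^sup>* u v"
  shows "acyclic_graph (insert {u, v} E)"
  unfolding acyclic_graph_def
proof
  assume "\<exists>xs. is_cycle (insert {u, v} E) xs"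
  then obtain xs where cyc: "is_cycle (insert {u, v} E) xs" by blast
  define L where "L = length xs"
  have L_pos: "0 < L" and L3: "3 \<le> L" and dist: "distinct xs" using cyc by (auto simp: is_cycle_def L_def)
  have "\<not> is_cycle E xs" using acyc unfolding acyclic_graph_def by blast
  then obtain i where i: "i < L" and edge_i: "{xs ! i, xs ! ((i + 1) mod L)} = {u, v}"
    using cyc unfolding is_cycle_def L_def by auto
  \<comment> \<open>Rotate the cycle so that {u, v} becomes its closing edge; the rest is a path in E.\<close>
  define ys where "ys = rotate (Suc i) xs"
  have cyc_ys: "is_cycle (insert {u, v} E) ys" unfolding ys_def by (rule is_cycle_rotate[OF cyc])
  have len_ys: "length ys = L" and dist_ys: "distinct ys" using dist by (auto simp: ys_def L_def)
  have "ys ! (L - 1) = xs ! i"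
  proof -
    have "(Suc i + (L - 1)) mod L = i" using i L3 by (simp add: Suc_diff_le)
    then show ?thesis using nth_rotate[of "L - 1" xs "Suc i"] L3 by (simp add: ys_def L_def)
  qed
  moreover have "ys ! 0 = xs ! ((i + 1) mod L)"
    using nth_rotate[of 0 xs "Suc i"] L_pos by (simp add: ys_def L_def)
  ultimately have closing: "{ys ! (L - 1), ys ! 0} = {u, v}" using edge_i by simp
  have inj: "ys ! a = ys ! b \<longleftrightarrow> a = b" if "a < L" "b < L" for a b
    using nth_eq_iff_index_eq[OF dist_ys] that len_ys by simp
  have "adj E (ys ! j) (ys ! Suc j)" if j: "j < L - 1" for j
  proof -
    have "j < length ys" and "(j + 1) mod length ys = Suc j" using j len_ys by auto
    with cyc_ys have "{ys ! j, ys ! Suc j} \<in> insert {u, v} E"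
      unfolding is_cycle_def by (metis (no_types, lifting))
    moreover have "{ys ! j, ys ! Suc j} \<noteq> {ys ! (L - 1), ys ! 0}"
      using j L3 inj[of j "L - 1"] inj[of j 0] inj[of "Suc j" "L - 1"]
      by (auto simp: doubleton_eq_iff)
    ultimately show ?thesis using closing by (simp add: adj_def)
  qed
  then have "(adj E)\<^sup>*\<^sup>* (ys ! 0) (ys ! (L - 1))" by (rule rtranclp_chain)
  then show False
    using closing disconnected by (metis doubleton_eq_iff rtranclp_adj_sym)
qed

lemma spanning_tree_exchange:
  assumes tree: "spanning_tree V T" and xy: "{x, y} \<in> T"
    and uv: "{u, v} \<in> complete_edges V"
    and ux: "(adj (T - {{x, y}}))\<^sup>*\<^sup>* u x" and yv: "(adj (T - {{x, y}}))\<^sup>*\<^sup>* y v"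
  shows "spanning_tree V (insert {u, v} (T - {{x, y}}))"
proof -
  define F where "F = T - {{x, y}}"
  define T' where "T' = insert {u, v} F"
  have uxF: "(adj F)\<^sup>*\<^sup>* u x" and yvF: "(adj F)\<^sup>*\<^sup>* y v"
    using ux yv unfolding F_def .
  have Tsub: "T \<subseteq> complete_edges V" and acyc: "acyclic_graph T" and conn: "connected_graph V T"
    using tree by (auto simp: spanning_tree_def)
  have "{x, y} \<in> complete_edges V" using xy Tsub by blast
  then have "x \<noteq> y" by (simp add: doubleton_in_complete_edges_iff)
  then have "\<not> (adj F)\<^sup>*\<^sup>* x y" unfolding F_def by (rule acyclic_edge_is_bridge[OF acyc xy])
  then have "\<not> (adj F)\<^sup>*\<^sup>* u v"
    using rtranclp_adj_sym[OF uxF] rtranclp_adj_sym[OF yvF] by (meson rtranclp_trans)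
  moreover have "acyclic_graph F" using acyclic_graph_subset[OF _ acyc] by (simp add: F_def)
  ultimately have acyc': "acyclic_graph T'" unfolding T'_def by (rule acyclic_insert_edge[rotated])
  have FT': "F \<subseteq> T'" by (auto simp: T'_def)
  have "(adj T')\<^sup>*\<^sup>* x y"
  proof -
    have "(adj T')\<^sup>*\<^sup>* x u"
      using rtranclp_adj_mono[OF FT' rtranclp_adj_sym[OF uxF]] .
    moreover have "adj T' u v" by (simp add: T'_def adj_def)
    moreover have "(adj T')\<^sup>*\<^sup>* v y"
      using rtranclp_adj_mono[OF FT' rtranclp_adj_sym[OF yvF]] .
    ultimately show ?thesis by (meson rtranclp.rtrancl_into_rtrancl rtranclp_trans)
  qed
  then have "(adj T')\<^sup>*\<^sup>* p q" if "adj T p q" for p q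
  proof (cases "{p, q} = {x, y}")
    case True
    then show ?thesis
      using \<open>(adj T')\<^sup>*\<^sup>* x y\<close> rtranclp_adj_sym by (auto simp: doubleton_eq_iff)
  next
    case False
    then have "adj T' p q" using that by (simp add: adj_def T'_def F_def)
    then show ?thesis by simp
  qed
  then have "(adj T)\<^sup>*\<^sup>* \<le> (adj T')\<^sup>*\<^sup>*"
    by (metis predicate2I rtranclp_idemp rtranclp_mono)
  then have "connected_graph V T'" using conn by (auto simp: connected_graph_def)
  moreover have "T' \<subseteq> complete_edges V" using Tsub uv by (auto simp: T'_def F_def)
  ultimately show ?thesis using acyc' by (simp add: spanning_tree_def T'_def F_def)
qed

lemma max_spanning_tree_heavy_path:
  assumes "finite V" and mst: "max_spanning_tree V w T" and uv: "{u, v} \<in> complete_edges V"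
  shows "(adj {e \<in> T. w {u, v} \<le> w e})\<^sup>*\<^sup>* u v"
proof (rule ccontr)
  define H where "H = {e \<in> T. w {u, v} \<le> w e}"
  define S where "S = {z. (adj H)\<^sup>*\<^sup>* u z}"
  assume "\<not> ?thesis"
  then have "v \<notin> S" by (simp add: S_def H_def)
  have tree: "spanning_tree V T" using mst by (simp add: max_spanning_tree_def)
  then have Tsub: "T \<subseteq> complete_edges V" and "connected_graph V T"
    by (auto simp: spanning_tree_def)
  then have "(adj T)\<^sup>*\<^sup>* u v"
    using uv by (auto simp: connected_graph_def doubleton_in_complete_edges_iff)
  moreover have "u \<in> S" by (simp add: S_def)
  ultimately obtain x y where xy: "adj T x y" "x \<in> S" "y \<notin> S"
    and out: "(\<lambda>p q. adj T p q \<and> p \<notin> S \<and> q \<notin> S)\<^sup>*\<^sup>* y v"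
    using \<open>v \<notin> S\<close> by (rule rtranclp_exit_edge)
  have light: "w {x, y} < w {u, v}"
  proof (rule ccontr)
    assume "\<not> w {x, y} < w {u, v}"
    then have "adj H x y" using xy(1) by (simp add: H_def adj_def)
    then show False using xy(2,3) by (simp add: S_def rtranclp.rtrancl_into_rtrancl)
  qed
  define F where "F = T - {{x, y}}"
  have "H \<subseteq> F" using light by (auto simp: H_def F_def)
  then have ux: "(adj F)\<^sup>*\<^sup>* u x" using xy(2) rtranclp_adj_mono by (simp add: S_def)
  have "(\<lambda>p q. adj T p q \<and> p \<notin> S \<and> q \<notin> S) \<le> adj F"
    using xy(2) by (auto simp: adj_def F_def doubleton_eq_iff)
  then have yv: "(adj F)\<^sup>*\<^sup>* y v" using out by (rule rtranclp_mono[THEN predicate2D])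
  have "{u, v} \<notin> T"
  proof
    assume "{u, v} \<in> T"
    then have "adj H u v" by (simp add: H_def adj_def)
    then show False using \<open>v \<notin> S\<close> by (simp add: S_def r_into_rtranclp)
  qed
  have "{x, y} \<in> T" using xy(1) by (simp add: adj_def)
  have "finite T" using Tsub finite_complete_edges[OF \<open>finite V\<close>] by (rule finite_subset)
  have "spanning_tree V (insert {u, v} F)"
    using spanning_tree_exchange[OF tree \<open>{x, y} \<in> T\<close> uv] ux yv by (simp add: F_def)
  then have "sum w (insert {u, v} F) \<le> sum w T"
    using mst by (simp add: max_spanning_tree_def)
  moreover have "sum w (insert {u, v} F) = sum w T - w {x, y} + w {u, v}"
    using \<open>finite T\<close> \<open>{u, v} \<notin> T\<close> \<open>{x, y} \<in> T\<close> by (simp add: F_def sum_diff1)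
  ultimately show False using light by simp
qed

lemma proper_col_mono: "F \<subseteq> E \<Longrightarrow> proper_col E \<phi> \<Longrightarrow> proper_col F \<phi>"
  unfolding proper_col_def by blast

lemma proper_col_rtranclp_parity:
  assumes "proper_col E \<chi>" "proper_col E \<phi>" "(adj E)\<^sup>*\<^sup>* p q"
  shows "\<chi> p = \<chi> q \<longleftrightarrow> \<phi> p = \<phi> q"
  using assms(3)
proof (induction rule: rtranclp_induct)
  case (step y z)
  then have "\<chi> y \<noteq> \<chi> z" "\<phi> y \<noteq> \<phi> z"
    using assms(1,2) by (auto simp: proper_col_def adj_def)
  then show ?case using step.IH by auto
qed simp

lemma diam_le_iff: "diam w S \<le> ereal lam \<longleftrightarrow> (\<forall>u\<in>S. \<forall>v\<in>S. u \<noteq> v \<longrightarrow> w {u, v} \<le> lam)"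
  unfolding diam_def by (auto simp: Sup_le_iff) (metis ereal_less_eq(3))

lemma diam_col_le_iff:
  "diam_col w V \<chi> \<le> ereal lam \<longleftrightarrow>
     (\<forall>u\<in>V. \<forall>v\<in>V. u \<noteq> v \<longrightarrow> \<chi> u = \<chi> v \<longrightarrow> w {u, v} \<le> lam)"
  unfolding diam_col_def by (auto simp: diam_le_iff)

lemma proper_col_above_complete_edges_iff:
  assumes "finite V" and mst: "max_spanning_tree V w T" and \<chi>: "proper_col T \<chi>"
  shows "proper_col (above w lam (complete_edges V)) \<phi> \<longleftrightarrow>
           diam_col w V \<chi> \<le> ereal lam \<and> proper_col (above w lam T) \<phi>"
proof -
  have Tsub: "T \<subseteq> complete_edges V"
    using mst by (simp add: max_spanning_tree_def spanning_tree_def)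
  have parity: "\<chi> u = \<chi> v \<longleftrightarrow> \<phi> u = \<phi> v"
    if \<phi>: "proper_col (above w lam T) \<phi>" and uv: "{u, v} \<in> complete_edges V"
      and heavy: "lam < w {u, v}" for u v
  proof -
    let ?H = "{e \<in> T. w {u, v} \<le> w e}"
    have "proper_col ?H \<chi>" using \<chi> by (rule proper_col_mono[rotated]) blast
    moreover have "proper_col ?H \<phi>"
      using \<phi> by (rule proper_col_mono[rotated]) (use heavy in \<open>auto simp: above_def\<close>)
    ultimately show ?thesis
      using max_spanning_tree_heavy_path[OF \<open>finite V\<close> mst uv] by (rule proper_col_rtranclp_parity)
  qed
  show ?thesis
  proof
    assume G: "proper_col (above w lam (complete_edges V)) \<phi>"
    then have \<phi>: "proper_col (above w lam T) \<phi>"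
      by (rule proper_col_mono[rotated]) (use Tsub in \<open>auto simp: above_def\<close>)
    have "w {u, v} \<le> lam" if "u \<in> V" "v \<in> V" "u \<noteq> v" "\<chi> u = \<chi> v" for u v
    proof (rule ccontr)
      assume "\<not> w {u, v} \<le> lam"
      moreover have uv: "{u, v} \<in> complete_edges V"
        using that by (simp add: doubleton_in_complete_edges_iff)
      ultimately have "\<phi> u \<noteq> \<phi> v" using G by (simp add: proper_col_def above_def)
      then show False using parity[OF \<phi> uv] \<open>\<not> w {u, v} \<le> lam\<close> \<open>\<chi> u = \<chi> v\<close> by simp
    qed
    with \<phi> show "diam_col w V \<chi> \<le> ereal lam \<and> proper_col (above w lam T) \<phi>"
      by (simp add: diam_col_le_iff)
  next
    assume "diam_col w V \<chi> \<le> ereal lam \<and> proper_col (above w lam T) \<phi>"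
    then have diam: "\<forall>u\<in>V. \<forall>v\<in>V. u \<noteq> v \<longrightarrow> \<chi> u = \<chi> v \<longrightarrow> w {u, v} \<le> lam"
      and \<phi>: "proper_col (above w lam T) \<phi>"
      by (simp_all add: diam_col_le_iff)
    show "proper_col (above w lam (complete_edges V)) \<phi>"
      unfolding proper_col_def
    proof (intro allI impI)
      fix u v assume "{u, v} \<in> above w lam (complete_edges V)"
      then have uv: "{u, v} \<in> complete_edges V" and heavy: "lam < w {u, v}"
        by (simp_all add: above_def)
      have "\<chi> u = \<chi> v \<longrightarrow> w {u, v} \<le> lam"
        using diam uv by (simp add: doubleton_in_complete_edges_iff)
      then have "\<chi> u \<noteq> \<chi> v" using heavy by linarith
      then show "\<phi> u \<noteq> \<phi> v" using parity[OF \<phi> uv heavy] by simp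
    qed
  qed
qed

theorem lemma1:
  fixes V :: "'a set" and n :: nat and w :: "'a set \<Rightarrow> real"
    and T :: "'a set set" and \<chi> :: "'a \<Rightarrow> bool"
  assumes "finite V" and "card V = n"
    and "max_spanning_tree V w T"
    and "proper_col T \<chi>"
  shows "\<forall>(lam::real) (c::nat). c \<le> n \<longrightarrow>
           (admits_proper_col_card V (above w lam (complete_edges V)) c \<longleftrightarrow>
            diam_col w V \<chi> \<le> ereal lam \<and> admits_proper_col_card V (above w lam T) c)"
  \<comment> \<open>The equivalence holds colouring by colouring.\<close>
  using proper_col_above_complete_edges_iff[OF assms(1,3,4)]
  by (auto simp: admits_proper_col_card_def)

end
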